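(* Let $k_{\mathcal{A}},k_{\mathcal{W}},k_{\mathcal{Y}}$ be bounded positive semidefinite kernels on $\mathcal{A},\mathcal{W},\mathcal{Y}$ with RKHSs $\mathcal{H}_{\mathcal{A}},\mathcal{H}_{\mathcal{W}},\mathcal{H}_{\mathcal{Y}}$ and canonical features $\phi_{\mathcal{A}},\phi_{\mathcal{W}},\phi_{\mathcal{Y}}$. Let $\mathcal{H}_{\mathcal{A}\mathcal{W}}$ and $\mathcal{H}_{\mathcal{A}\mathcal{Y}}$ be the tensor-product RKHSs with features $\phi_{\mathcal{A}}(a)\otimes\phi_{\mathcal{W}}(w)$ and $\phi_{\mathcal{A}\mathcal{Y}}(a,y)=\phi_{\mathcal{A}}(a)\otimes\phi_{\mathcal{Y}}(y)$, and let $\mathcal{H}_{\mathcal{W}(\mathcal{A}\mathcal{Y})}$ be the space of Hilbert–Schmidt operators $\mathcal{H}_{\mathcal{A}\mathcal{Y}}\to\mathcal{H}_{\mathcal{W}}$. Given stage 1 samples $\{(w_i,a_i,y_i)\}_{i=1}^n$, stage 2 samples $\{(\dot a_i,\dot y_i)\}_{i=1}^m$ and regularization parameters $\lambda,\eta>0$, define $$\hat C_{W|A,Y}=\arg\min_{C\in\mathcal{H}_{\mathcal{W}(\mathcal{A}\mathcal{Y})}}\frac1n\sum_{i=1}^n\|\phi_{\mathcal{W}}(w_i)-C\,\phi_{\mathcal{A}\mathcal{Y}}(a_i,y_i)\|^2_{\mathcal{H}_{\mathcal{W}}}+\lambda\|C\|^2_{\mathcal{H}_{\mathcal{W}(\mathcal{A}\mathcal{Y})}},$$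 $$\hat h=\arg\min_{h\in\mathcal{H}_{\mathcal{A}\mathcal{W}}}\frac1m\sum_{i=1}^m\Big(\dot y_i-\big\langle h,\ \phi_{\mathcal{A}}(\dot a_i)\otimes\hat C_{W|A,Y}\phi_{\mathcal{A}\mathcal{Y}}(\dot a_i,\dot y_i)\big\rangle_{\mathcal{H}_{\mathcal{A}\mathcal{W}}}\Big)^2+\eta\|h\|^2_{\mathcal{H}_{\mathcal{A}\mathcal{W}}}.$$ Then $$\hat h(a,w)=\vec\alpha^\top\vec k(a,w),\qquad \vec\alpha=(M+m\eta I)^{-1}\dot{\vec y},$$ where $\dot{\vec y}=(\dot y_1,\dots,\dot y_m)^\top\in\mathbb{R}^m$, $$M=K_{\dot A\dot A}\odot(B^\top K_{WW}B)\in\mathbb{R}^{m\times m},\quad \vec k(a,w)=\vec k_{\dot A}(a)\odot(B^\top\vec k_W(w))\in\mathbb{R}^m,\quad B=(K_{AA}\odot K_{YY}+n\lambda I)^{-1}(K_{A\dot A}\odot K_{Y\dot Y})\in\mathbb{R}^{n\times m}.$$ Here $K_{AA},K_{WW},K_{YY}\in\mathbb{R}^{n\times n}$ are the stage 1 kernel matrices (e.g. $(K_{AA})_{ij}=k_{\mathcal{A}}(a_i,a_j)$), $K_{\dot A\dot A}=(k_{\mathcal{A}}(\dot a_i,\dot a_j))_{ij}\in\mathbb{R}^{m\times m}$, $K_{A\dot A}=(k_{\mathcal{A}}(a_i,\dot a_j))_{ij}$, $K_{Y\dot Y}=(k_{\mathcal{Y}}(y_i,\dot y_j))_{ij}\in\mathbb{R}^{n\times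 m}$, $\vec k_{\dot A}(a)=(k_{\mathcal{A}}(\dot a_i,a))_{i=1}^m\in\mathbb{R}^m$, and $\vec k_W(w)=(k_{\mathcal{W}}(w_i,w))_{i=1}^n\in\mathbb{R}^n$.
   Context: $\odot$ denotes the entrywise (Hadamard) product; $\otimes$ the tensor product of RKHS elements. *)

theory Defs
  imports "HOL-Analysis.Analysis" "Jordan_Normal_Form.Gauss_Jordan_Elimination"
begin

text \<open>The RKHS of a kernel k on X is represented (up to isometric isomorphism) by a
  Hilbert space H with a feature map phi : X -> H such that
  inner (phi x) (phi y) = k x y and the features span a dense subspace.
  Evaluation of f in H at x is inner f (phi x) (reproducing property).\<close>

definition is_rkhs_feature :: "('x \<Rightarrow> 'x \<Rightarrow> real) \<Rightarrow> ('x \<Rightarrow> 'h::{real_inner,complete_space}) \<Rightarrow> bool" where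
  "is_rkhs_feature k phi \<longleftrightarrow>
     (\<forall>x y. inner (phi x) (phi y) = k x y) \<and> closure (span (range phi)) = UNIV"

definition bounded_kernel :: "('x \<Rightarrow> 'x \<Rightarrow> real) \<Rightarrow> bool" where
  "bounded_kernel k \<longleftrightarrow> (\<exists>B. \<forall>x y. \<bar>k x y\<bar> \<le> B)"

definition psd_kernel :: "('x \<Rightarrow> 'x \<Rightarrow> real) \<Rightarrow> bool" where
  "psd_kernel k \<longleftrightarrow> (\<forall>x y. k x y = k y x) \<and>
     (\<forall>(xs::'x list) (c::real list). length c = length xs \<longrightarrow>
        (\<Sum>i<length xs. \<Sum>j<length xs. c!i * c!j * k (xs!i) (xs!j)) \<ge> 0)"

text \<open>Hilbert-space tensor product: T is a Hilbert space with a bilinear map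
  tens : H1 -> H2 -> T satisfying inner (x (x) y) (x' (x) y') = inner x x' * inner y y'
  whose range spans a dense subspace (characterizes H1 (x) H2 up to unique isometry).\<close>

definition is_tensor_product :: "('h1::{real_inner,complete_space} \<Rightarrow> 'h2::{real_inner,complete_space} \<Rightarrow> 't::{real_inner,complete_space}) \<Rightarrow> bool" where
  "is_tensor_product tens \<longleftrightarrow>
     (\<forall>x. linear (tens x)) \<and> (\<forall>y. linear (\<lambda>x. tens x y)) \<and>
     (\<forall>x y x' y'. inner (tens x y) (tens x' y') = inner x x' * inner y y') \<and>
     closure (span {tens x y | x y. True}) = UNIV"

definition orthonormal_basis :: "'h::{real_inner,complete_space} set \<Rightarrow> bool" where
  "orthonormal_basis E \<longleftrightarrow> (\<forall>e\<in>E. norm e = 1) \<and>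
     (\<forall>e\<in>E. \<forall>f\<in>E. e \<noteq> f \<longrightarrow> inner e f = 0) \<and> closure (span E) = UNIV"

definition some_onb :: "'h::{real_inner,complete_space} set" where
  "some_onb = (SOME E. orthonormal_basis E)"

definition hilbert_schmidt :: "('h1::{real_inner,complete_space} \<Rightarrow> 'h2::{real_inner,complete_space}) \<Rightarrow> bool" where
  "hilbert_schmidt C \<longleftrightarrow> bounded_linear C \<and> (\<lambda>e. (norm (C e))\<^sup>2) summable_on some_onb"

definition hs_norm_sq :: "('h1::{real_inner,complete_space} \<Rightarrow> 'h2::{real_inner,complete_space}) \<Rightarrow> real" where
  "hs_norm_sq C = infsum (\<lambda>e. (norm (C e))\<^sup>2) some_onb"

definition hadamard_mat :: "real mat \<Rightarrow> real mat \<Rightarrow> real mat" (infixl "\<odot>\<^sub>m" 70) where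
  "A \<odot>\<^sub>m B = mat (dim_row A) (dim_col A) (\<lambda>(i,j). A $$ (i,j) * B $$ (i,j))"

definition hadamard_vec :: "real vec \<Rightarrow> real vec \<Rightarrow> real vec" (infixl "\<odot>\<^sub>v" 70) where
  "v \<odot>\<^sub>v u = vec (dim_vec v) (\<lambda>i. v $ i * u $ i)"

definition mat_inv :: "real mat \<Rightarrow> real mat" where
  "mat_inv A = the (mat_inverse A)"

definition kmat :: "('x \<Rightarrow> 'x \<Rightarrow> real) \<Rightarrow> nat \<Rightarrow> (nat \<Rightarrow> 'x) \<Rightarrow> nat \<Rightarrow> (nat \<Rightarrow> 'x) \<Rightarrow> real mat" where
  "kmat k p xs q ys = mat p q (\<lambda>(i,j). k (xs i) (ys j))"

definition kvec :: "('x \<Rightarrow> 'x \<Rightarrow> real) \<Rightarrow> nat \<Rightarrow> (nat \<Rightarrow> 'x) \<Rightarrow> 'x \<Rightarrow> real vec" where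
  "kvec k p xs x = vec p (\<lambda>i. k (xs i) x)"

definition B_matrix where
  "B_matrix kA kY n (a :: nat \<Rightarrow> 'a) (y :: nat \<Rightarrow> real) m (ad :: nat \<Rightarrow> 'a) (yd :: nat \<Rightarrow> real) lam =
     mat_inv ((kmat kA n a n a \<odot>\<^sub>m kmat kY n y n y) + (real n * lam) \<cdot>\<^sub>m 1\<^sub>m n)
       * (kmat kA n a m ad \<odot>\<^sub>m kmat kY n y m yd)"

definition M_matrix where
  "M_matrix kA kW n (w :: nat \<Rightarrow> 'w) m (ad :: nat \<Rightarrow> 'a) B =
     kmat kA m ad m ad \<odot>\<^sub>m (transpose_mat B * kmat kW n w n w * B)"

definition alpha_vec where
  "alpha_vec kA kW n (w :: nat \<Rightarrow> 'w) m (ad :: nat \<Rightarrow> 'a) (yd :: nat \<Rightarrow> real) eta B =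
     mat_inv (M_matrix kA kW n w m ad B + (real m * eta) \<cdot>\<^sub>m 1\<^sub>m m) *\<^sub>v vec m yd"

definition stage1_obj where
  "stage1_obj phiW phiAY n (w :: nat \<Rightarrow> 'w) (a :: nat \<Rightarrow> 'a) (y :: nat \<Rightarrow> real) lam C =
     (1 / real n) * (\<Sum>i<n. (norm (phiW (w i) - C (phiAY (a i) (y i))))\<^sup>2) + lam * hs_norm_sq C"

definition stage2_obj where
  "stage2_obj phiA phiAY tensAW C m (ad :: nat \<Rightarrow> 'a) (yd :: nat \<Rightarrow> real) \<eta> h =
     (1 / real m) * (\<Sum>i<m. (yd i - inner h (tensAW (phiA (ad i)) (C (phiAY (ad i) (yd i)))))\<^sup>2)
     + \<eta> * (norm h)\<^sup>2"

end

theory Submission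
  imports Defs "Jordan_Normal_Form.Determinant"
begin

text \<open>Both stages are ridge regressions. If a candidate C0 = sum_j <u_j, -> z_j satisfies the
  normal equations r_i - C0 u_i = n lam z_i, the risk splits as
  risk (C0 + D) = risk C0 + (fit term in D) + lam ||D||_HS^2,
  so C0 is the unique minimizer. Writing the coefficients through the regularized Gram matrix
  K + n lam I solves the normal equations, and the Gram matrices of tensor features are Hadamard
  products of kernel matrices; this yields B, M and alpha. The Hilbert-Schmidt norm is a sum over
  an orthonormal basis (which exists by Zorn's lemma), and the cross term is evaluated by the
  Parseval expansion in that basis.\<close>

section \<open>Orthonormal bases of Hilbert spaces\<close>

definition orthonormal :: "'h::real_inner set \<Rightarrow> bool" where
  "orthonormal E \<longleftrightarrow> (\<forall>e\<in>E. norm e = 1) \<and> (\<forall>e\<in>E. \<forall>f\<in>E. e \<noteq> f \<longrightarrow> inner e f = 0)"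

lemma orthonormal_basis_iff: "orthonormal_basis E \<longleftrightarrow> orthonormal E \<and> closure (span E) = UNIV"
  unfolding orthonormal_basis_def orthonormal_def by auto

lemma orthonormal_inner:
  assumes "orthonormal E" "e \<in> E" "f \<in> E"
  shows "inner e f = (if e = f then 1 else 0)"
  using assms unfolding orthonormal_def by (auto simp: norm_eq_1)

lemma inner_sum_orthonormal:
  assumes "orthonormal E" "finite G" "G \<subseteq> E" "e0 \<in> G"
  shows "inner (\<Sum>e\<in>G. c e *\<^sub>R e) e0 = c e0"
proof -
  have "inner (\<Sum>e\<in>G. c e *\<^sub>R e) e0 = (\<Sum>e\<in>G. if e = e0 then c e else 0)"
    unfolding inner_sum_left
  proof (intro sum.cong refl)
    fix e assume "e \<in> G"
    then have "e \<in> E" "e0 \<in> E" using assms by auto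
    then show "inner (c e *\<^sub>R e) e0 = (if e = e0 then c e else 0)"
      using orthonormal_inner[OF assms(1)] by simp
  qed
  then show ?thesis using assms by simp
qed

lemma norm_sum_orthonormal:
  assumes "orthonormal E" "finite G" "G \<subseteq> E"
  shows "(norm (\<Sum>e\<in>G. c e *\<^sub>R e))\<^sup>2 = (\<Sum>e\<in>G. (c e)\<^sup>2)"
  unfolding power2_norm_eq_inner inner_sum_right[of _ _ G]
  using assms by (intro sum.cong refl) (auto simp: inner_sum_orthonormal power2_eq_square)

lemma bessel_inequality:
  assumes "orthonormal E" "finite G" "G \<subseteq> E"
  shows "(\<Sum>e\<in>G. (inner x e)\<^sup>2) \<le> (norm x)\<^sup>2"
proof -
  define s where "s = (\<Sum>e\<in>G. inner x e *\<^sub>R e)"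
  have xs: "inner x s = (\<Sum>e\<in>G. (inner x e)\<^sup>2)"
    unfolding s_def by (simp add: inner_sum_right power2_eq_square)
  have ss: "inner s s = (\<Sum>e\<in>G. (inner x e)\<^sup>2)"
    using norm_sum_orthonormal[OF assms] unfolding s_def power2_norm_eq_inner by simp
  have "0 \<le> inner (x - s) (x - s)" by simp
  also have "\<dots> = inner x x - 2 * inner x s + inner s s"
    by (simp add: inner_diff_left inner_diff_right inner_commute)
  finally show ?thesis using xs ss by (simp add: power2_norm_eq_inner)
qed

lemma bessel_summable:
  assumes "orthonormal E"
  shows "(\<lambda>e. (inner x e)\<^sup>2) summable_on E"
  by (rule nonneg_bdd_above_summable_on)
     (use bessel_inequality[OF assms] in \<open>auto intro!: bdd_aboveI[where M="(norm x)\<^sup>2"]\<close>)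

lemma summable_on_Cauchy_tail:
  fixes f :: "'a \<Rightarrow> 'b::{real_normed_vector,complete_space}"
  assumes "\<And>e. e > 0 \<Longrightarrow> \<exists>F0. finite F0 \<and> F0 \<subseteq> A \<and>
             (\<forall>G. finite G \<and> G \<subseteq> A - F0 \<longrightarrow> norm (sum f G) < e)"
  shows "f summable_on A"
proof -
  have "\<exists>P. eventually P (finite_subsets_at_top A) \<and>
          (\<forall>F F'. P F \<and> P F' \<longrightarrow> dist (sum f F) (sum f F') < e)" if "e > 0" for e
  proof -
    obtain F0 where F0: "finite F0" "F0 \<subseteq> A"
      and tail: "\<And>G. finite G \<Longrightarrow> G \<subseteq> A - F0 \<Longrightarrow> norm (sum f G) < e/2"
      using assms[of "e/2"] \<open>e > 0\<close> by auto
    define P where "P F \<longleftrightarrow> finite F \<and> F0 \<subseteq> F \<and> F \<subseteq> A" for F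
    have "eventually P (finite_subsets_at_top A)"
      unfolding P_def eventually_finite_subsets_at_top using F0 by blast
    moreover have "dist (sum f F) (sum f F') < e" if "P F" "P F'" for F F'
    proof -
      have split: "sum f X = sum f F0 + sum f (X - F0)" if "P X" for X
        using that unfolding P_def by (metis add.commute sum.subset_diff)
      have "dist (sum f F) (sum f F') = norm (sum f (F - F0) - sum f (F' - F0))"
        unfolding dist_norm split[OF \<open>P F\<close>] split[OF \<open>P F'\<close>] by simp
      also have "\<dots> \<le> norm (sum f (F - F0)) + norm (sum f (F' - F0))"
        by (rule norm_triangle_ineq4)
      also have "\<dots> < e/2 + e/2"
        using that unfolding P_def by (intro add_strict_mono tail) auto
      finally show ?thesis by simp
    qed
    ultimately show ?thesis by blast
  qed
  then have "cauchy_filter (filtermap (sum f) (finite_subsets_at_top A))"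
    by (simp add: cauchy_filter_metric_filtermap)
  then obtain L where "(sum f \<longlongrightarrow> L) (finite_subsets_at_top A)"
    using complete_uniform[where S=UNIV] complete_UNIV by (force simp: filterlim_def)
  then show ?thesis
    unfolding summable_on_def has_sum_def by blast
qed

lemma summable_on_norm_sq_dominated:
  fixes f :: "'a \<Rightarrow> 'b::{real_normed_vector,complete_space}" and g :: "'a \<Rightarrow> real"
  assumes g: "g summable_on A" and g_nonneg: "\<And>x. x \<in> A \<Longrightarrow> g x \<ge> 0"
    and dom: "\<And>G. finite G \<Longrightarrow> G \<subseteq> A \<Longrightarrow> (norm (sum f G))\<^sup>2 \<le> sum g G"
  shows "f summable_on A"
proof (rule summable_on_Cauchy_tail)
  fix e :: real assume "e > 0"
  from g obtain L where L: "(g has_sum L) A"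
    unfolding summable_on_def by blast
  then have "eventually (\<lambda>F. dist (sum g F) L < e\<^sup>2) (finite_subsets_at_top A)"
    unfolding has_sum_def using \<open>e > 0\<close> by (simp add: tendsto_iff)
  then obtain F0 where F0: "finite F0" "F0 \<subseteq> A" and close: "dist (sum g F0) L < e\<^sup>2"
    unfolding eventually_finite_subsets_at_top by blast
  have "norm (sum f G) < e" if G: "finite G" "G \<subseteq> A - F0" for G
  proof -
    have "sum g F0 + sum g G = sum g (F0 \<union> G)"
      using G F0 by (subst sum.union_disjoint) auto
    also have "\<dots> \<le> L"
      using G F0 by (intro finite_sum_le_has_sum[OF L]) (auto intro: g_nonneg)
    moreover have "(norm (sum f G))\<^sup>2 \<le> sum g G"
      using G by (intro dom) auto
    ultimately have "(norm (sum f G))\<^sup>2 < e\<^sup>2"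
      using close unfolding dist_real_def by auto
    then show ?thesis
      using \<open>e > 0\<close> by (simp add: power_less_imp_less_base)
  qed
  with F0 show "\<exists>F0. finite F0 \<and> F0 \<subseteq> A \<and> (\<forall>G. finite G \<and> G \<subseteq> A - F0 \<longrightarrow> norm (sum f G) < e)"
    by blast
qed

lemma orthonormal_expansion_summable:
  fixes x :: "'h::{real_inner,complete_space}"
  assumes "orthonormal E"
  shows "(\<lambda>e. inner x e *\<^sub>R e) summable_on E"
  by (rule summable_on_norm_sq_dominated[OF bessel_summable[OF assms, of x]])
     (use norm_sum_orthonormal[OF assms] in auto)

lemma has_sum_orthonormal_expansion:
  fixes x :: "'h::{real_inner,complete_space}"
  assumes "orthonormal E"
  shows "((\<lambda>e. inner x e *\<^sub>R e) has_sum (\<Sum>\<^sub>\<infinity>e\<in>E. inner x e *\<^sub>R e)) E"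
  using orthonormal_expansion_summable[OF assms] by (simp add: summable_iff_has_sum_infsum)

lemma inner_orthonormal_expansion:
  fixes x :: "'h::{real_inner,complete_space}"
  assumes "orthonormal E" "e0 \<in> E"
  shows "inner (\<Sum>\<^sub>\<infinity>e\<in>E. inner x e *\<^sub>R e) e0 = inner x e0"
proof -
  have "((\<lambda>e. inner (inner x e *\<^sub>R e) e0) has_sum inner (\<Sum>\<^sub>\<infinity>e\<in>E. inner x e *\<^sub>R e) e0) E"
    using has_sum_orthonormal_expansion[OF assms(1)]
    by (rule has_sum_bounded_linear[OF bounded_linear_inner_left])
  moreover have "((\<lambda>e. inner (inner x e *\<^sub>R e) e0) has_sum inner x e0) E"
  proof (rule has_sum_cong_neutral[THEN iffD1, rotated -1])
    show "((\<lambda>e. inner (inner x e *\<^sub>R e) e0) has_sum inner x e0) {e0}"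
      using has_sum_finite[of "{e0}" "\<lambda>e. inner (inner x e *\<^sub>R e) e0"]
        orthonormal_inner[OF assms(1,2,2)] by simp
  qed (use assms in \<open>auto simp: orthonormal_inner\<close>)
  ultimately show ?thesis
    using has_sum_unique by blast
qed

lemma orthonormal_expansion_in_closure_span:
  fixes x :: "'h::{real_inner,complete_space}"
  assumes "orthonormal E"
  shows "(\<Sum>\<^sub>\<infinity>e\<in>E. inner x e *\<^sub>R e) \<in> closure (span E)"
proof (rule Lim_in_closed_set[OF closed_closure _ finite_subsets_at_top_neq_bot
      has_sum_orthonormal_expansion[OF assms, unfolded has_sum_def]])
  show "\<forall>\<^sub>F G in finite_subsets_at_top E. (\<Sum>e\<in>G. inner x e *\<^sub>R e) \<in> closure (span E)"
    by (rule eventually_finite_subsets_at_top_weakI)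
       (meson closure_subset span_scale span_base span_sum subsetD subset_iff)
qed

lemma orthogonal_to_dense_span_eq_0:
  fixes v :: "'h::real_inner"
  assumes "\<And>e. e \<in> E \<Longrightarrow> inner v e = 0" "closure (span E) = UNIV"
  shows "v = 0"
proof -
  have "span E \<subseteq> {x. inner v x = 0}"
    using real_vector.linear_eq_0_on_span[of "inner v" E] assms(1)
    by (auto intro: bounded_linear.linear[OF bounded_linear_inner_right])
  then have "closure (span E) \<subseteq> {x. inner v x = 0}"
    by (rule closure_minimal) (intro closed_Collect_eq continuous_intros)
  then have "inner v v = 0"
    using assms(2) by blast
  then show ?thesis by simp
qed

lemma has_sum_orthonormal_basis_expansion:
  fixes x :: "'h::{real_inner,complete_space}"
  assumes "orthonormal_basis E"
  shows "((\<lambda>e. inner x e *\<^sub>R e) has_sum x) E"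
proof -
  have E: "orthonormal E" "closure (span E) = UNIV"
    using assms by (auto simp: orthonormal_basis_iff)
  have "x - (\<Sum>\<^sub>\<infinity>e\<in>E. inner x e *\<^sub>R e) = 0"
    by (rule orthogonal_to_dense_span_eq_0[OF _ E(2)])
       (simp add: inner_diff_left inner_orthonormal_expansion[OF E(1)])
  then show ?thesis
    using has_sum_orthonormal_expansion[OF E(1), of x] by simp
qed

lemma orthonormal_chain_Union:
  assumes "C \<in> chains {E. orthonormal E}"
  shows "orthonormal (\<Union>C)"
  unfolding orthonormal_def
proof (intro conjI ballI impI)
  fix e assume "e \<in> \<Union>C"
  then show "norm e = 1"
    using chainsD2[OF assms] unfolding orthonormal_def by blast
next
  fix e f assume "e \<in> \<Union>C" "f \<in> \<Union>C" "e \<noteq> f"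
  then obtain X Y where XY: "X \<in> C" "e \<in> X" "Y \<in> C" "f \<in> Y" by blast
  then obtain Z where "Z \<in> C" "e \<in> Z" "f \<in> Z"
    using chainsD[OF assms XY(1,3)] by blast
  then show "inner e f = 0"
    using chainsD2[OF assms] \<open>e \<noteq> f\<close> unfolding orthonormal_def by blast
qed

text \<open>A vector outside the closed span, minus its expansion, is orthogonal to the set; this
  is where completeness of the space is needed.\<close>

lemma orthonormal_extend:
  fixes M :: "'h::{real_inner,complete_space} set"
  assumes M: "orthonormal M" and x: "x \<notin> closure (span M)"
  shows "\<exists>e. e \<notin> M \<and> orthonormal (insert e M)"
proof -
  define v where "v = x - (\<Sum>\<^sub>\<infinity>e\<in>M. inner x e *\<^sub>R e)"
  have "v \<noteq> 0"
    using x orthonormal_expansion_in_closure_span[OF M, of x] unfolding v_def by auto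
  have v_orth: "inner v e = 0" if "e \<in> M" for e
    using inner_orthonormal_expansion[OF M that, of x] unfolding v_def
    by (simp add: inner_diff_left)
  define e' where "e' = v /\<^sub>R norm v"
  have "norm e' = 1" "\<And>e. e \<in> M \<Longrightarrow> inner e' e = 0"
    unfolding e'_def using \<open>v \<noteq> 0\<close> v_orth by auto
  then have "e' \<notin> M" "orthonormal (insert e' M)"
    using M unfolding orthonormal_def by (force, metis inner_commute insert_iff)
  then show ?thesis by blast
qed

lemma orthonormal_basis_exists: "\<exists>E::'h::{real_inner,complete_space} set. orthonormal_basis E"
proof -
  obtain M :: "'h set" where M: "orthonormal M"
    and maximal: "\<And>X. orthonormal X \<Longrightarrow> M \<subseteq> X \<Longrightarrow> X = M"
    using Zorn_Lemma[of "{E. orthonormal E}"] orthonormal_chain_Union by blast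
  have "closure (span M) = UNIV"
  proof (rule ccontr)
    assume "closure (span M) \<noteq> UNIV"
    then obtain e where "e \<notin> M" "orthonormal (insert e M)"
      using orthonormal_extend[OF M] by blast
    then show False
      using maximal[of "insert e M"] by blast
  qed
  with M show ?thesis
    by (auto simp: orthonormal_basis_iff)
qed

lemma orthonormal_basis_some_onb: "orthonormal_basis some_onb"
  unfolding some_onb_def using orthonormal_basis_exists by (rule someI_ex)

section \<open>Hilbert-Schmidt operators\<close>

lemma norm_add_sq_le: "(norm (a + b :: 'a::real_inner))\<^sup>2 \<le> 2 * (norm a)\<^sup>2 + 2 * (norm b)\<^sup>2"
proof -
  have "(norm (a + b))\<^sup>2 + (norm (a - b))\<^sup>2 = 2 * (norm a)\<^sup>2 + 2 * (norm b)\<^sup>2"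
    by (simp add: power2_norm_eq_inner inner_add_left inner_add_right
        inner_diff_left inner_diff_right inner_commute)
  moreover have "0 \<le> (norm (a - b))\<^sup>2" by simp
  ultimately show ?thesis by linarith
qed

lemma hilbert_schmidt_add_scaleR:
  fixes A B :: "'h1::{real_inner,complete_space} \<Rightarrow> 'h2::{real_inner,complete_space}"
  assumes "hilbert_schmidt A" "hilbert_schmidt B"
  shows "hilbert_schmidt (\<lambda>x. A x + c *\<^sub>R B x)"
  unfolding hilbert_schmidt_def
proof
  show "bounded_linear (\<lambda>x. A x + c *\<^sub>R B x)"
    using assms unfolding hilbert_schmidt_def
    by (intro bounded_linear_add bounded_linear_compose[OF bounded_linear_scaleR_right]) auto
  have "(\<lambda>e. 2 * (norm (A e))\<^sup>2 + 2 * c\<^sup>2 * (norm (B e))\<^sup>2) summable_on some_onb"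
    using assms unfolding hilbert_schmidt_def
    by (intro summable_on_add summable_on_cmult_right) auto
  moreover have "(norm (A e + c *\<^sub>R B e))\<^sup>2 \<le> 2 * (norm (A e))\<^sup>2 + 2 * c\<^sup>2 * (norm (B e))\<^sup>2" for e
    using norm_add_sq_le[of "A e" "c *\<^sub>R B e"] by (simp add: power_mult_distrib)
  ultimately show "(\<lambda>e. (norm (A e + c *\<^sub>R B e))\<^sup>2) summable_on some_onb"
    by (rule summable_on_comparison_test) simp
qed

lemma hilbert_schmidt_sum:
  fixes F :: "'j \<Rightarrow> 'h1::{real_inner,complete_space} \<Rightarrow> 'h2::{real_inner,complete_space}"
  assumes "finite J" "\<And>j. j \<in> J \<Longrightarrow> hilbert_schmidt (F j)"
  shows "hilbert_schmidt (\<lambda>x. \<Sum>j\<in>J. F j x)"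
  using assms
proof (induction J rule: finite_induct)
  case empty
  then show ?case
    by (simp add: hilbert_schmidt_def bounded_linear_zero)
next
  case (insert j J)
  then show ?case
    using hilbert_schmidt_add_scaleR[of "F j" "\<lambda>x. \<Sum>j\<in>J. F j x" 1] by simp
qed

lemma hilbert_schmidt_rank_one:
  fixes u :: "'h1::{real_inner,complete_space}" and z :: "'h2::{real_inner,complete_space}"
  shows "hilbert_schmidt (\<lambda>x. inner u x *\<^sub>R z)"
  unfolding hilbert_schmidt_def
proof
  show "bounded_linear (\<lambda>x. inner u x *\<^sub>R z)"
    by (rule bounded_linear_compose[OF bounded_linear_scaleR_left bounded_linear_inner_right])
  have "orthonormal (some_onb :: 'h1 set)"
    using orthonormal_basis_some_onb orthonormal_basis_iff by blast
  then have "(\<lambda>e. (inner u e)\<^sup>2 * (norm z)\<^sup>2) summable_on some_onb"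
    by (intro summable_on_cmult_left bessel_summable)
  then show "(\<lambda>e. (norm (inner u e *\<^sub>R z))\<^sup>2) summable_on some_onb"
    by (simp add: power_mult_distrib)
qed

lemma hs_inner_summable:
  fixes A B :: "'h1::{real_inner,complete_space} \<Rightarrow> 'h2::{real_inner,complete_space}"
  assumes "hilbert_schmidt A" "hilbert_schmidt B"
  shows "(\<lambda>e. inner (A e) (B e)) summable_on some_onb"
proof -
  have "(\<lambda>e. (norm (A e))\<^sup>2 + (norm (B e))\<^sup>2) summable_on some_onb"
    using assms unfolding hilbert_schmidt_def by (intro summable_on_add) auto
  moreover have "norm (inner (A e) (B e)) \<le> (norm (A e))\<^sup>2 + (norm (B e))\<^sup>2" for e
  proof -
    have "norm (inner (A e) (B e)) \<le> norm (A e) * norm (B e)"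
      unfolding real_norm_def by (rule Cauchy_Schwarz_ineq2)
    also have "\<dots> \<le> (norm (A e))\<^sup>2 + (norm (B e))\<^sup>2"
      using sum_squares_bound[of "norm (A e)" "norm (B e)"]
        mult_nonneg_nonneg[OF norm_ge_zero norm_ge_zero, of "A e" "B e"] by linarith
    finally show ?thesis .
  qed
  ultimately have "(\<lambda>e. norm (inner (A e) (B e))) summable_on some_onb"
    by (rule summable_on_comparison_test) simp
  then show ?thesis
    using summable_on_iff_abs_summable_on_real by blast
qed

lemma hs_norm_sq_add:
  fixes A B :: "'h1::{real_inner,complete_space} \<Rightarrow> 'h2::{real_inner,complete_space}"
  assumes "hilbert_schmidt A" "hilbert_schmidt B"
  shows "hs_norm_sq (\<lambda>x. A x + B x)
    = hs_norm_sq A + 2 * (\<Sum>\<^sub>\<infinity>e\<in>some_onb. inner (A e) (B e)) + hs_norm_sq B"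
proof -
  have sA: "(\<lambda>e. (norm (A e))\<^sup>2) summable_on some_onb"
    and sB: "(\<lambda>e. (norm (B e))\<^sup>2) summable_on some_onb"
    using assms unfolding hilbert_schmidt_def by auto
  have sI: "(\<lambda>e. 2 * inner (A e) (B e)) summable_on some_onb"
    by (intro summable_on_cmult_right hs_inner_summable assms)
  have "(norm (A e + B e))\<^sup>2 = ((norm (A e))\<^sup>2 + 2 * inner (A e) (B e)) + (norm (B e))\<^sup>2" for e
    by (simp add: power2_norm_eq_inner inner_add_left inner_add_right inner_commute)
  then have "hs_norm_sq (\<lambda>x. A x + B x)
      = (\<Sum>\<^sub>\<infinity>e\<in>some_onb. (norm (A e))\<^sup>2 + 2 * inner (A e) (B e)) + hs_norm_sq B"
    unfolding hs_norm_sq_def by (simp add: infsum_add sA sB sI summable_on_add)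
  also have "(\<Sum>\<^sub>\<infinity>e\<in>some_onb. (norm (A e))\<^sup>2 + 2 * inner (A e) (B e))
      = hs_norm_sq A + 2 * (\<Sum>\<^sub>\<infinity>e\<in>some_onb. inner (A e) (B e))"
    unfolding hs_norm_sq_def
    by (simp add: infsum_add sA sI infsum_cmult_right hs_inner_summable assms)
  finally show ?thesis .
qed

lemma hs_norm_sq_nonneg: "hs_norm_sq C \<ge> 0"
  unfolding hs_norm_sq_def by (rule infsum_nonneg) simp

lemma hs_norm_sq_le_0_imp_zero:
  fixes D :: "'h1::{real_inner,complete_space} \<Rightarrow> 'h2::{real_inner,complete_space}"
  assumes "hilbert_schmidt D" "hs_norm_sq D \<le> 0"
  shows "D = (\<lambda>x. 0)"
proof -
  have D: "bounded_linear D" "(\<lambda>e. (norm (D e))\<^sup>2) summable_on some_onb"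
    using assms(1) unfolding hilbert_schmidt_def by auto
  have "D e = 0" if "e \<in> some_onb" for e
    using nonneg_infsum_le_0D[OF assms(2)[unfolded hs_norm_sq_def] D(2) _ that] by simp
  then have "span some_onb \<subseteq> {x. D x = 0}"
    using real_vector.linear_eq_0_on_span[of D some_onb] bounded_linear.linear[OF D(1)] by auto
  then have "closure (span some_onb) \<subseteq> {x. D x = 0}"
    by (rule closure_minimal)
       (intro closed_Collect_eq linear_continuous_on[OF D(1)] continuous_on_const)
  then show ?thesis
    using orthonormal_basis_some_onb by (auto simp: orthonormal_basis_iff)
qed

lemma has_sum_hs_inner_finite_rank:
  fixes u :: "'j \<Rightarrow> 'h1::{real_inner,complete_space}"
    and z :: "'j \<Rightarrow> 'h2::{real_inner,complete_space}"
  assumes D: "bounded_linear D" and "finite J"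
  shows "((\<lambda>e. inner (\<Sum>j\<in>J. inner (u j) e *\<^sub>R z j) (D e))
    has_sum (\<Sum>j\<in>J. inner (z j) (D (u j)))) some_onb"
  using \<open>finite J\<close>
proof (induction J rule: finite_induct)
  case empty
  then show ?case by simp
next
  case (insert j J)
  have "((\<lambda>e. inner (u j) e * inner (z j) (D e)) has_sum inner (z j) (D (u j))) some_onb"
    using has_sum_bounded_linear[OF bounded_linear_compose[OF bounded_linear_inner_right D]
        has_sum_orthonormal_basis_expansion[OF orthonormal_basis_some_onb, of "u j"]]
    by (simp add: linear_cmul[OF bounded_linear.linear[OF D]])
  from has_sum_add[OF this insert.IH] insert.hyps show ?case
    by (simp add: inner_add_left)
qed

section \<open>Ridge regression and its normal equations\<close>

definition operator_ridge_risk ::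
    "nat \<Rightarrow> (nat \<Rightarrow> 'h1::{real_inner,complete_space}) \<Rightarrow> (nat \<Rightarrow> 'h2::{real_inner,complete_space})
      \<Rightarrow> real \<Rightarrow> ('h1 \<Rightarrow> 'h2) \<Rightarrow> real" where
  "operator_ridge_risk n u r lam C =
     (1 / real n) * (\<Sum>i<n. (norm (r i - C (u i)))\<^sup>2) + lam * hs_norm_sq C"

definition ridge_risk :: "nat \<Rightarrow> (nat \<Rightarrow> 'h::real_inner) \<Rightarrow> (nat \<Rightarrow> real) \<Rightarrow> real \<Rightarrow> 'h \<Rightarrow> real" where
  "ridge_risk m psi t eta h = (1 / real m) * (\<Sum>i<m. (t i - inner h (psi i))\<^sup>2) + eta * (norm h)\<^sup>2"

text \<open>By the normal equations the cross term -(2/n) sum_i <r_i - C0 u_i, D u_i> of the fit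
  cancels the cross term 2 lam <C0, D>_HS of the penalty.\<close>

lemma operator_ridge_risk_split:
  fixes u :: "nat \<Rightarrow> 'h1::{real_inner,complete_space}"
    and r z :: "nat \<Rightarrow> 'h2::{real_inner,complete_space}" and n :: nat
  assumes C0: "C0 = (\<lambda>x. \<Sum>j<n. inner (u j) x *\<^sub>R z j)" and n: "n > 0"
    and normal: "\<And>i. i < n \<Longrightarrow> r i - C0 (u i) = (real n * lam) *\<^sub>R z i"
    and C: "hilbert_schmidt C"
  shows "operator_ridge_risk n u r lam C = operator_ridge_risk n u r lam C0
    + (1 / real n) * (\<Sum>i<n. (norm (C (u i) - C0 (u i)))\<^sup>2) + lam * hs_norm_sq (\<lambda>x. C x - C0 x)"
proof -
  define D where "D = (\<lambda>x. C x - C0 x)"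
  have "hilbert_schmidt (\<lambda>x. \<Sum>j<n. inner (u j) x *\<^sub>R z j)"
    by (intro hilbert_schmidt_sum hilbert_schmidt_rank_one) simp
  then have C0_hs: "hilbert_schmidt C0"
    by (simp add: C0)
  have D: "hilbert_schmidt D"
    unfolding D_def using hilbert_schmidt_add_scaleR[OF C C0_hs, of "-1"] by simp
  have CD: "C = (\<lambda>x. C0 x + D x)"
    unfolding D_def by simp
  have "(\<Sum>\<^sub>\<infinity>e\<in>some_onb. inner (C0 e) (D e)) = (\<Sum>j<n. inner (z j) (D (u j)))"
    using has_sum_hs_inner_finite_rank[of D "{..<n}" u z] D
    unfolding hilbert_schmidt_def by (simp add: infsumI C0)
  then have hs: "hs_norm_sq C = hs_norm_sq C0 + 2 * (\<Sum>i<n. inner (z i) (D (u i))) + hs_norm_sq D"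
    unfolding CD by (simp add: hs_norm_sq_add[OF C0_hs D])
  have "(norm (r i - C (u i)))\<^sup>2
      = (norm (r i - C0 (u i)))\<^sup>2 - 2 * (real n * lam) * inner (z i) (D (u i)) + (norm (D (u i)))\<^sup>2"
    if "i < n" for i
  proof -
    have "(norm (r i - C (u i)))\<^sup>2 = (norm ((r i - C0 (u i)) - D (u i)))\<^sup>2"
      unfolding CD by (simp add: algebra_simps)
    also have "\<dots> = (norm (r i - C0 (u i)))\<^sup>2 - 2 * inner (r i - C0 (u i)) (D (u i))
        + (norm (D (u i)))\<^sup>2"
      by (simp add: power2_norm_eq_inner inner_diff_left inner_diff_right inner_commute)
    finally show ?thesis
      using normal[OF that] by simp
  qed
  then have "(\<Sum>i<n. (norm (r i - C (u i)))\<^sup>2) = (\<Sum>i<n. (norm (r i - C0 (u i)))\<^sup>2)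
      - 2 * (real n * lam) * (\<Sum>i<n. inner (z i) (D (u i))) + (\<Sum>i<n. (norm (D (u i)))\<^sup>2)"
    by (simp add: sum.distrib sum_subtractf sum_distrib_left)
  then show ?thesis
    using n unfolding operator_ridge_risk_def hs D_def by (simp add: field_simps)
qed

lemma operator_ridge_minimizer:
  fixes u :: "nat \<Rightarrow> 'h1::{real_inner,complete_space}"
    and r z :: "nat \<Rightarrow> 'h2::{real_inner,complete_space}" and n :: nat
  assumes C0: "C0 = (\<lambda>x. \<Sum>j<n. inner (u j) x *\<^sub>R z j)" and n: "n > 0" and lam: "lam > 0"
    and normal: "\<And>i. i < n \<Longrightarrow> r i - C0 (u i) = (real n * lam) *\<^sub>R z i"
  shows "hilbert_schmidt C0"
    and "\<And>C. hilbert_schmidt C \<Longrightarrow> operator_ridge_risk n u r lam C0 \<le> operator_ridge_risk n u r lam C"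
    and "\<And>C. hilbert_schmidt C \<Longrightarrow> operator_ridge_risk n u r lam C \<le> operator_ridge_risk n u r lam C0
           \<Longrightarrow> C = C0"
proof -
  have "hilbert_schmidt (\<lambda>x. \<Sum>j<n. inner (u j) x *\<^sub>R z j)"
    by (intro hilbert_schmidt_sum hilbert_schmidt_rank_one) simp
  then show C0_hs: "hilbert_schmidt C0"
    by (simp add: C0)
  have split: "operator_ridge_risk n u r lam C = operator_ridge_risk n u r lam C0
      + (1 / real n) * (\<Sum>i<n. (norm (C (u i) - C0 (u i)))\<^sup>2) + lam * hs_norm_sq (\<lambda>x. C x - C0 x)"
    if "hilbert_schmidt C" for C
    by (rule operator_ridge_risk_split[OF C0 n normal that])
  have fit_nonneg: "0 \<le> (1 / real n) * (\<Sum>i<n. (norm (C (u i) - C0 (u i)))\<^sup>2)" for C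
    by (intro mult_nonneg_nonneg sum_nonneg) auto
  show "operator_ridge_risk n u r lam C0 \<le> operator_ridge_risk n u r lam C"
    if "hilbert_schmidt C" for C
  proof -
    have "0 \<le> lam * hs_norm_sq (\<lambda>x. C x - C0 x)"
      using lam by (intro mult_nonneg_nonneg hs_norm_sq_nonneg) simp
    then show ?thesis
      using split[OF that] fit_nonneg[of C] by linarith
  qed
  show "C = C0"
    if C: "hilbert_schmidt C" "operator_ridge_risk n u r lam C \<le> operator_ridge_risk n u r lam C0" for C
  proof -
    have "lam * hs_norm_sq (\<lambda>x. C x - C0 x) \<le> 0"
      using split[OF C(1)] fit_nonneg[of C] C(2) by linarith
    then have "hs_norm_sq (\<lambda>x. C x - C0 x) \<le> 0"
      using lam by (simp add: mult_le_0_iff)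
    moreover have "hilbert_schmidt (\<lambda>x. C x - C0 x)"
      using hilbert_schmidt_add_scaleR[OF C(1) C0_hs, of "-1"] by simp
    ultimately have "(\<lambda>x. C x - C0 x) = (\<lambda>x. 0)"
      by (rule hs_norm_sq_le_0_imp_zero[rotated])
    then have "C x - C0 x = 0" for x
      by (rule fun_cong)
    then show ?thesis
      by (simp add: fun_eq_iff)
  qed
qed

lemma ridge_risk_split:
  fixes psi :: "nat \<Rightarrow> 'h::real_inner" and alpha t :: "nat \<Rightarrow> real" and m :: nat
  assumes h0: "h0 = (\<Sum>j<m. alpha j *\<^sub>R psi j)" and m: "m > 0"
    and normal: "\<And>i. i < m \<Longrightarrow> t i - inner h0 (psi i) = real m * eta * alpha i"
  shows "ridge_risk m psi t eta h = ridge_risk m psi t eta h0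
    + (1 / real m) * (\<Sum>i<m. (inner (h - h0) (psi i))\<^sup>2) + eta * (norm (h - h0))\<^sup>2"
proof -
  define d where "d = h - h0"
  have "(t i - inner h (psi i))\<^sup>2
      = (t i - inner h0 (psi i))\<^sup>2 - 2 * (real m * eta) * (alpha i * inner d (psi i))
        + (inner d (psi i))\<^sup>2"
    if "i < m" for i
  proof -
    have "t i - inner h (psi i) = (t i - inner h0 (psi i)) - inner d (psi i)"
      unfolding d_def by (simp add: inner_diff_left)
    then show ?thesis
      using normal[OF that] by (simp add: power2_diff)
  qed
  then have "(\<Sum>i<m. (t i - inner h (psi i))\<^sup>2) = (\<Sum>i<m. (t i - inner h0 (psi i))\<^sup>2)
      - 2 * (real m * eta) * (\<Sum>i<m. alpha i * inner d (psi i)) + (\<Sum>i<m. (inner d (psi i))\<^sup>2)"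
    by (simp add: sum.distrib sum_subtractf sum_distrib_left)
  moreover have "(norm h)\<^sup>2 = (norm h0)\<^sup>2 + 2 * (\<Sum>j<m. alpha j * inner d (psi j)) + (norm d)\<^sup>2"
  proof -
    have "inner h0 d = (\<Sum>j<m. alpha j * inner d (psi j))"
      unfolding h0 inner_sum_left by (simp add: inner_commute)
    moreover have "h = h0 + d"
      unfolding d_def by simp
    ultimately show ?thesis
      by (simp add: power2_norm_eq_inner inner_add_left inner_add_right inner_commute)
  qed
  ultimately show ?thesis
    using m unfolding ridge_risk_def d_def by (simp add: field_simps)
qed

lemma ridge_minimizer:
  fixes psi :: "nat \<Rightarrow> 'h::real_inner" and alpha t :: "nat \<Rightarrow> real" and m :: nat
  assumes h0: "h0 = (\<Sum>j<m. alpha j *\<^sub>R psi j)" and m: "m > 0" and eta: "eta > 0"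
    and normal: "\<And>i. i < m \<Longrightarrow> t i - inner h0 (psi i) = real m * eta * alpha i"
  shows "ridge_risk m psi t eta h0 \<le> ridge_risk m psi t eta h"
    and "ridge_risk m psi t eta h \<le> ridge_risk m psi t eta h0 \<Longrightarrow> h = h0"
proof -
  have split: "ridge_risk m psi t eta h = ridge_risk m psi t eta h0
      + (1 / real m) * (\<Sum>i<m. (inner (h - h0) (psi i))\<^sup>2) + eta * (norm (h - h0))\<^sup>2"
    by (rule ridge_risk_split[OF h0 m normal])
  have fit_nonneg: "0 \<le> (1 / real m) * (\<Sum>i<m. (inner (h - h0) (psi i))\<^sup>2)"
    by (intro mult_nonneg_nonneg sum_nonneg) auto
  have "0 \<le> eta * (norm (h - h0))\<^sup>2"
    using eta by simp
  then show "ridge_risk m psi t eta h0 \<le> ridge_risk m psi t eta h"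
    using split fit_nonneg by linarith
  show "h = h0" if "ridge_risk m psi t eta h \<le> ridge_risk m psi t eta h0"
  proof -
    have "eta * (norm (h - h0))\<^sup>2 \<le> 0"
      using split fit_nonneg that by linarith
    then show ?thesis
      using eta by (simp add: mult_le_0_iff)
  qed
qed

section \<open>Gram matrices and coefficient vectors\<close>

definition gram_mat :: "nat \<Rightarrow> (nat \<Rightarrow> 'h::real_inner) \<Rightarrow> nat \<Rightarrow> (nat \<Rightarrow> 'h) \<Rightarrow> real mat" where
  "gram_mat p f q g = mat p q (\<lambda>(i,j). inner (f i) (g j))"

definition lincomb :: "nat \<Rightarrow> real vec \<Rightarrow> (nat \<Rightarrow> 'v::real_vector) \<Rightarrow> 'v" where
  "lincomb p c r = (\<Sum>k<p. c $ k *\<^sub>R r k)"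

lemma gram_mat_carrier[simp]: "gram_mat p f q g \<in> carrier_mat p q"
  unfolding gram_mat_def by simp

lemma dim_gram_mat[simp]: "dim_row (gram_mat p f q g) = p" "dim_col (gram_mat p f q g) = q"
  unfolding gram_mat_def by simp_all

lemma index_gram_mat[simp]: "i < p \<Longrightarrow> j < q \<Longrightarrow> gram_mat p f q g $$ (i,j) = inner (f i) (g j)"
  unfolding gram_mat_def by simp

lemma col_gram_mat[simp]: "j < q \<Longrightarrow> col (gram_mat p f q g) j = vec p (\<lambda>i. inner (f i) (g j))"
  unfolding gram_mat_def by simp

lemma kmat_eq_gram_mat:
  assumes "\<And>x x'. inner (phi x) (phi x') = k x x'"
  shows "kmat k p xs q ys = gram_mat p (\<lambda>i. phi (xs i)) q (\<lambda>j. phi (ys j))"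
  unfolding kmat_def gram_mat_def by (simp add: assms)

lemma hadamard_gram_mat_tensor:
  assumes "\<And>x y x' y'. inner (tens x y) (tens x' y') = inner x x' * inner y y'"
  shows "gram_mat p f q g \<odot>\<^sub>m gram_mat p f' q g'
    = gram_mat p (\<lambda>i. tens (f i) (f' i)) q (\<lambda>j. tens (g j) (g' j))"
  unfolding hadamard_mat_def gram_mat_def by (rule eq_matI) (auto simp: assms)

lemma scalar_prod_vec_eq_sum: "c \<bullet> vec p f = (\<Sum>k<p. c $ k * f k)"
  unfolding scalar_prod_def by (simp add: atLeast0LessThan)

lemma lincomb_unit_vec:
  assumes "k < p"
  shows "lincomb p (unit_vec p k) r = r k"
proof -
  have "lincomb p (unit_vec p k) r = (\<Sum>i<p. if i = k then r i else 0)"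
    unfolding lincomb_def using assms by (intro sum.cong refl) auto
  then show ?thesis
    using assms by simp
qed

lemma lincomb_add:
  "c \<in> carrier_vec p \<Longrightarrow> d \<in> carrier_vec p \<Longrightarrow> lincomb p (c + d) r = lincomb p c r + lincomb p d r"
  unfolding lincomb_def by (simp add: scaleR_add_left sum.distrib)

lemma lincomb_smult:
  "c \<in> carrier_vec p \<Longrightarrow> lincomb p (s \<cdot>\<^sub>v c) r = s *\<^sub>R lincomb p c r"
  unfolding lincomb_def by (simp add: scaleR_sum_right)

lemma lincomb_mult_mat_vec:
  assumes "A \<in> carrier_mat p q" "c \<in> carrier_vec q"
  shows "lincomb p (A *\<^sub>v c) r = lincomb q c (\<lambda>j. lincomb p (col A j) r)"
proof -
  have "lincomb p (A *\<^sub>v c) r = (\<Sum>k<p. \<Sum>j<q. (A $$ (k,j) * c $ j) *\<^sub>R r k)"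
    unfolding lincomb_def using assms
    by (intro sum.cong refl) (auto simp: scalar_prod_def atLeast0LessThan scaleR_sum_left)
  also have "\<dots> = (\<Sum>j<q. \<Sum>k<p. (A $$ (k,j) * c $ j) *\<^sub>R r k)"
    by (rule sum.swap)
  also have "\<dots> = lincomb q c (\<lambda>j. lincomb p (col A j) r)"
    unfolding lincomb_def using assms
    by (intro sum.cong refl) (auto simp: scaleR_sum_right mult.commute)
  finally show ?thesis .
qed

lemma inner_lincomb_left:
  "c \<in> carrier_vec p \<Longrightarrow> inner (lincomb p c r) x = c \<bullet> vec p (\<lambda>k. inner (r k) x)"
  unfolding lincomb_def scalar_prod_vec_eq_sum by (simp add: inner_sum_left)

lemma inner_lincomb:
  assumes "c \<in> carrier_vec p" "d \<in> carrier_vec p"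
  shows "inner (lincomb p c r) (lincomb p d r) = c \<bullet> (gram_mat p r p r *\<^sub>v d)"
proof -
  have "inner (r k) (lincomb p d r) = (gram_mat p r p r *\<^sub>v d) $ k" if "k < p" for k
    using that assms(2) unfolding lincomb_def gram_mat_def
    by (simp add: inner_sum_right scalar_prod_def atLeast0LessThan mult.commute)
  then have "vec p (\<lambda>k. inner (r k) (lincomb p d r)) = gram_mat p r p r *\<^sub>v d"
    by (intro eq_vecI) auto
  then show ?thesis
    unfolding inner_lincomb_left[OF assms(1)] by simp
qed

lemma transpose_mult_gram_mat_mult:
  assumes "B \<in> carrier_mat n m"
  shows "transpose_mat B * gram_mat n r n r * B
    = gram_mat m (\<lambda>l. lincomb n (col B l) r) m (\<lambda>l. lincomb n (col B l) r)"
    (is "_ = ?G")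
proof (rule eq_matI)
  fix i j assume "i < dim_row ?G" "j < dim_col ?G"
  then have ij: "i < m" "j < m" by auto
  have "(transpose_mat B * gram_mat n r n r * B) $$ (i,j)
      = (transpose_mat B * (gram_mat n r n r * B)) $$ (i,j)"
    using assms by (subst assoc_mult_mat[of _ m n _ n _ m]) auto
  also have "\<dots> = col B i \<bullet> (gram_mat n r n r *\<^sub>v col B j)"
    using assms ij by (simp add: col_mult2[OF gram_mat_carrier assms])
  also have "\<dots> = inner (lincomb n (col B i) r) (lincomb n (col B j) r)"
    using assms ij by (simp add: inner_lincomb)
  finally show "(transpose_mat B * gram_mat n r n r * B) $$ (i,j) = ?G $$ (i,j)"
    using ij by simp
qed (use assms in auto)

lemma transpose_mult_vec_inner:
  assumes "B \<in> carrier_mat n m"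
  shows "transpose_mat B *\<^sub>v vec n (\<lambda>k. inner (r k) x) = vec m (\<lambda>l. inner (lincomb n (col B l) r) x)"
  using assms by (intro eq_vecI) (auto simp: inner_lincomb_left)

lemma mult_mat_vec_add_smult_one:
  fixes A :: "real mat"
  assumes "A \<in> carrier_mat k k" "v \<in> carrier_vec k"
  shows "(A + c \<cdot>\<^sub>m 1\<^sub>m k) *\<^sub>v v = A *\<^sub>v v + c \<cdot>\<^sub>v v"
proof -
  have "(c \<cdot>\<^sub>m 1\<^sub>m k) *\<^sub>v v = c \<cdot>\<^sub>v v"
    using assms(2) by (intro eq_vecI) (auto simp: smult_scalar_prod_distrib[of _ k])
  then show ?thesis
    using assms by (simp add: add_mult_distrib_mat_vec[of _ k k])
qed

lemma regularized_gram_quadratic_form: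
  assumes "v \<in> carrier_vec k"
  shows "v \<bullet> ((gram_mat k g k g + c \<cdot>\<^sub>m 1\<^sub>m k) *\<^sub>v v) = (norm (lincomb k v g))\<^sup>2 + c * (\<Sum>i<k. (v $ i)\<^sup>2)"
proof -
  have "v \<bullet> ((gram_mat k g k g + c \<cdot>\<^sub>m 1\<^sub>m k) *\<^sub>v v)
      = v \<bullet> (gram_mat k g k g *\<^sub>v v) + c * (v \<bullet> v)"
    using assms
    by (simp add: mult_mat_vec_add_smult_one
        scalar_prod_add_distrib[OF assms mult_mat_vec_carrier[OF gram_mat_carrier assms]])
  moreover have "v \<bullet> (gram_mat k g k g *\<^sub>v v) = (norm (lincomb k v g))\<^sup>2"
    using assms by (simp add: inner_lincomb power2_norm_eq_inner)
  moreover have "v \<bullet> v = (\<Sum>i<k. (v $ i)\<^sup>2)"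
    using assms by (simp add: scalar_prod_def atLeast0LessThan power2_eq_square)
  ultimately show ?thesis
    by simp
qed

lemma det_regularized_gram_mat_nonzero:
  fixes g :: "nat \<Rightarrow> 'h::real_inner"
  assumes "c > 0"
  shows "det (gram_mat k g k g + c \<cdot>\<^sub>m 1\<^sub>m k) \<noteq> 0"
proof
  assume "det (gram_mat k g k g + c \<cdot>\<^sub>m 1\<^sub>m k) = 0"
  then obtain v where v: "v \<in> carrier_vec k" "v \<noteq> 0\<^sub>v k" "(gram_mat k g k g + c \<cdot>\<^sub>m 1\<^sub>m k) *\<^sub>v v = 0\<^sub>v k"
    using det_0_iff_vec_prod_zero_field[of "gram_mat k g k g + c \<cdot>\<^sub>m 1\<^sub>m k" k] by auto
  have "(norm (lincomb k v g))\<^sup>2 + c * (\<Sum>i<k. (v $ i)\<^sup>2) = 0"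
    using regularized_gram_quadratic_form[OF v(1), of g c] v(1,3) by simp
  moreover have "0 \<le> (\<Sum>i<k. (v $ i)\<^sup>2)"
    by (simp add: sum_nonneg)
  ultimately have "(\<Sum>i<k. (v $ i)\<^sup>2) = 0"
    using assms by (smt (verit) mult_pos_pos zero_le_power2)
  then have "v = 0\<^sub>v k"
    using v(1) by (intro eq_vecI) (auto simp: sum_nonneg_eq_0_iff)
  with v(2) show False ..
qed

lemma mat_inv_correct:
  fixes A :: "real mat"
  assumes A: "A \<in> carrier_mat k k" and det: "det A \<noteq> 0"
  shows "A * mat_inv A = 1\<^sub>m k" "mat_inv A * A = 1\<^sub>m k" "mat_inv A \<in> carrier_mat k k"
proof -
  have "A \<in> Units (ring_mat TYPE(real) k ())"
    by (rule det_non_zero_imp_unit[OF A det])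
  then obtain B where "mat_inverse A = Some B"
    using mat_inverse(1)[OF A, of "()"] by (cases "mat_inverse A") auto
  then show "A * mat_inv A = 1\<^sub>m k" "mat_inv A * A = 1\<^sub>m k" "mat_inv A \<in> carrier_mat k k"
    using mat_inverse(2)[OF A] unfolding mat_inv_def by auto
qed

lemma regularized_gram_mat_inverse:
  fixes g :: "nat \<Rightarrow> 'h::real_inner" and k :: nat
  assumes c: "c > 0"
  defines "G \<equiv> gram_mat k g k g + c \<cdot>\<^sub>m 1\<^sub>m k"
  shows "G * mat_inv G = 1\<^sub>m k" "mat_inv G * G = 1\<^sub>m k" "mat_inv G \<in> carrier_mat k k"
proof -
  have "G \<in> carrier_mat k k" "det G \<noteq> 0"
    unfolding G_def using det_regularized_gram_mat_nonzero[OF c] by simp_all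
  then show "G * mat_inv G = 1\<^sub>m k" "mat_inv G * G = 1\<^sub>m k" "mat_inv G \<in> carrier_mat k k"
    by (simp_all add: mat_inv_correct)
qed

lemma regularized_gram_mat_solve:
  fixes u :: "nat \<Rightarrow> 'h::real_inner" and r :: "nat \<Rightarrow> 'v::real_vector"
  assumes PG: "P * (gram_mat n u n u + c \<cdot>\<^sub>m 1\<^sub>m n) = 1\<^sub>m n" and P: "P \<in> carrier_mat n n"
    and i: "i < n"
  shows "lincomb n (P *\<^sub>v vec n (\<lambda>j. inner (u j) (u i))) r + c *\<^sub>R lincomb n (col P i) r = r i"
proof -
  have G: "gram_mat n u n u + c \<cdot>\<^sub>m 1\<^sub>m n \<in> carrier_mat n n"
    by simp
  have "P *\<^sub>v unit_vec n i = col P i"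
    using col_mult2[OF P one_carrier_mat i] P i by simp
  then have "P *\<^sub>v col (gram_mat n u n u + c \<cdot>\<^sub>m 1\<^sub>m n) i
      = P *\<^sub>v vec n (\<lambda>j. inner (u j) (u i)) + c \<cdot>\<^sub>v col P i"
    using P i by (simp add: col_add[OF gram_mat_carrier smult_carrier_mat[OF one_carrier_mat] i]
        mult_add_distrib_mat_vec[OF P] mult_mat_vec[OF P])
  moreover have "P *\<^sub>v col (gram_mat n u n u + c \<cdot>\<^sub>m 1\<^sub>m n) i = unit_vec n i"
    using col_mult2[OF P G i] PG i by simp
  ultimately show ?thesis
    using lincomb_unit_vec[OF i, of r] i P by (simp add: lincomb_add lincomb_smult)
qed

lemma operator_ridge_closed_form:
  fixes u :: "nat \<Rightarrow> 'h1::{real_inner,complete_space}"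
    and r :: "nat \<Rightarrow> 'h2::{real_inner,complete_space}"
  assumes n: "n > 0" and lam: "lam > 0"
  shows "hilbert_schmidt C \<and>
      (\<forall>C'. hilbert_schmidt C' \<longrightarrow> operator_ridge_risk n u r lam C \<le> operator_ridge_risk n u r lam C')
    \<longleftrightarrow> C = (\<lambda>x. lincomb n (mat_inv (gram_mat n u n u + (real n * lam) \<cdot>\<^sub>m 1\<^sub>m n)
                   *\<^sub>v vec n (\<lambda>j. inner (u j) x)) r)"
    (is "_ \<longleftrightarrow> C = ?C0")
proof -
  define P where "P = mat_inv (gram_mat n u n u + (real n * lam) \<cdot>\<^sub>m 1\<^sub>m n)"
  have "real n * lam > 0"
    using n lam by simp
  then have PG: "P * (gram_mat n u n u + (real n * lam) \<cdot>\<^sub>m 1\<^sub>m n) = 1\<^sub>m n"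
    and P: "P \<in> carrier_mat n n"
    unfolding P_def by (simp_all add: regularized_gram_mat_inverse)
  define z where "z j = lincomb n (col P j) r" for j
  have C0_eq: "?C0 = (\<lambda>x. \<Sum>j<n. inner (u j) x *\<^sub>R z j)"
    unfolding P_def[symmetric] z_def using P
    by (simp add: lincomb_mult_mat_vec) (simp add: lincomb_def)
  have "r i - ?C0 (u i) = (real n * lam) *\<^sub>R z i" if "i < n" for i
    using regularized_gram_mat_solve[OF PG P that, of r]
    unfolding P_def[symmetric] z_def by (simp add: algebra_simps)
  from operator_ridge_minimizer[OF C0_eq n lam this] show ?thesis
    by blast
qed

lemma ridge_closed_form:
  fixes psi :: "nat \<Rightarrow> 'h::real_inner"
  assumes m: "m > 0" and eta: "eta > 0"
  shows "(\<forall>h'. ridge_risk m psi t eta h \<le> ridge_risk m psi t eta h')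
    \<longleftrightarrow> h = lincomb m (mat_inv (gram_mat m psi m psi + (real m * eta) \<cdot>\<^sub>m 1\<^sub>m m) *\<^sub>v vec m t) psi"
proof -
  define G where "G = gram_mat m psi m psi + (real m * eta) \<cdot>\<^sub>m 1\<^sub>m m"
  define alpha where "alpha = mat_inv G *\<^sub>v vec m t"
  have "real m * eta > 0"
    using m eta by simp
  then have GP: "G * mat_inv G = 1\<^sub>m m" and P: "mat_inv G \<in> carrier_mat m m"
    unfolding G_def by (simp_all add: regularized_gram_mat_inverse)
  have alpha_carrier: "alpha \<in> carrier_vec m"
    unfolding alpha_def using P by simp
  have "G *\<^sub>v alpha = (G * mat_inv G) *\<^sub>v vec m t"
    unfolding alpha_def using P by (subst assoc_mult_mat_vec[of _ m m _ m]) (auto simp: G_def)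
  then have "G *\<^sub>v alpha = vec m t"
    using GP by simp
  then have system: "gram_mat m psi m psi *\<^sub>v alpha + (real m * eta) \<cdot>\<^sub>v alpha = vec m t"
    unfolding G_def using alpha_carrier by (simp add: mult_mat_vec_add_smult_one)
  have gram_alpha: "(gram_mat m psi m psi *\<^sub>v alpha) $ i = inner (lincomb m alpha psi) (psi i)"
    if "i < m" for i
  proof -
    have "(gram_mat m psi m psi *\<^sub>v alpha) $ i = (\<Sum>j<m. inner (psi i) (psi j) * alpha $ j)"
      using that alpha_carrier unfolding gram_mat_def
      by (simp add: scalar_prod_def atLeast0LessThan)
    also have "\<dots> = inner (lincomb m alpha psi) (psi i)"
      unfolding lincomb_def inner_sum_left by (intro sum.cong refl) (simp add: inner_commute)
    finally show ?thesis .
  qed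
  have "t i - inner (lincomb m alpha psi) (psi i) = real m * eta * alpha $ i" if "i < m" for i
    using arg_cong[OF system, of "\<lambda>v. v $ i"] that alpha_carrier gram_alpha[OF that] by simp
  from ridge_minimizer[OF lincomb_def m eta this] show ?thesis
    unfolding G_def alpha_def by (intro iffI allI) auto
qed

lemma kvec_eq_vec_inner:
  assumes "\<And>x x'. inner (phi x) (phi x') = k x x'"
  shows "kvec k p xs x = vec p (\<lambda>i. inner (phi (xs i)) (phi x))"
  unfolding kvec_def by (simp add: assms)

lemma B_matrix_eq_gram_mat:
  fixes a ad :: "nat \<Rightarrow> 'a" and y yd :: "nat \<Rightarrow> real"
  assumes ipA: "\<And>x x'. inner (phiA x) (phiA x') = kA x x'"
    and ipY: "\<And>x x'. inner (phiY x) (phiY x') = kY x x'"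
    and tens: "\<And>x y x' y'. inner (tens x y) (tens x' y') = inner x x' * inner y y'"
  defines "u \<equiv> \<lambda>i. tens (phiA (a i)) (phiY (y i))" and "v \<equiv> \<lambda>l. tens (phiA (ad l)) (phiY (yd l))"
  shows "B_matrix kA kY n a y m ad yd lam
    = mat_inv (gram_mat n u n u + (real n * lam) \<cdot>\<^sub>m 1\<^sub>m n) * gram_mat n u m v"
  unfolding B_matrix_def u_def v_def
  by (simp add: kmat_eq_gram_mat[OF ipA] kmat_eq_gram_mat[OF ipY] hadamard_gram_mat_tensor[OF tens])

lemma M_matrix_eq_gram_mat:
  fixes ad :: "nat \<Rightarrow> 'a" and w :: "nat \<Rightarrow> 'w" and B :: "real mat"
  assumes ipA: "\<And>x x'. inner (phiA x) (phiA x') = kA x x'"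
    and ipW: "\<And>x x'. inner (phiW x) (phiW x') = kW x x'"
    and tens: "\<And>x y x' y'. inner (tens x y) (tens x' y') = inner x x' * inner y y'"
    and B: "B \<in> carrier_mat n m"
  defines "psi \<equiv> \<lambda>l. tens (phiA (ad l)) (lincomb n (col B l) (\<lambda>k. phiW (w k)))"
  shows "M_matrix kA kW n w m ad B = gram_mat m psi m psi"
  unfolding M_matrix_def psi_def kmat_eq_gram_mat[OF ipA] kmat_eq_gram_mat[OF ipW]
  by (simp add: transpose_mult_gram_mat_mult[OF B] hadamard_gram_mat_tensor[OF tens])

lemma inner_lincomb_tensor_features:
  fixes ad :: "nat \<Rightarrow> 'a" and w :: "nat \<Rightarrow> 'w" and B :: "real mat"
  assumes ipA: "\<And>x x'. inner (phiA x) (phiA x') = kA x x'"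
    and ipW: "\<And>x x'. inner (phiW x) (phiW x') = kW x x'"
    and tens: "\<And>x y x' y'. inner (tens x y) (tens x' y') = inner x x' * inner y y'"
    and B: "B \<in> carrier_mat n m" and c: "c \<in> carrier_vec m"
  defines "psi \<equiv> \<lambda>l. tens (phiA (ad l)) (lincomb n (col B l) (\<lambda>k. phiW (w k)))"
  shows "inner (lincomb m c psi) (tens (phiA a0) (phiW w0))
    = c \<bullet> (kvec kA m ad a0 \<odot>\<^sub>v (transpose_mat B *\<^sub>v kvec kW n w w0))"
proof -
  have "kvec kA m ad a0 \<odot>\<^sub>v (transpose_mat B *\<^sub>v kvec kW n w w0)
      = vec m (\<lambda>l. inner (psi l) (tens (phiA a0) (phiW w0)))"
    unfolding kvec_eq_vec_inner[OF ipA] kvec_eq_vec_inner[OF ipW] transpose_mult_vec_inner[OF B]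
    by (intro eq_vecI) (simp_all add: hadamard_vec_def psi_def tens ipA)
  then show ?thesis
    using inner_lincomb_left[OF c] by simp
qed

theorem theorem2:
  fixes kA :: "'a \<Rightarrow> 'a \<Rightarrow> real" and kW :: "'w \<Rightarrow> 'w \<Rightarrow> real" and kY :: "real \<Rightarrow> real \<Rightarrow> real"
    and phiA :: "'a \<Rightarrow> 'ha::{real_inner,complete_space}"
    and phiW :: "'w \<Rightarrow> 'hw::{real_inner,complete_space}"
    and phiY :: "real \<Rightarrow> 'hy::{real_inner,complete_space}"
    and tensAW :: "'ha \<Rightarrow> 'hw \<Rightarrow> 'haw::{real_inner,complete_space}"
    and tensAY :: "'ha \<Rightarrow> 'hy \<Rightarrow> 'hay::{real_inner,complete_space}"
    and n m :: nat
    and w :: "nat \<Rightarrow> 'w" and a :: "nat \<Rightarrow> 'a" and y :: "nat \<Rightarrow> real"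
    and ad :: "nat \<Rightarrow> 'a" and yd :: "nat \<Rightarrow> real"
    and lam \<eta> :: real
  assumes kernels: "psd_kernel kA" "psd_kernel kW" "psd_kernel kY"
    and bounded: "bounded_kernel kA" "bounded_kernel kW" "bounded_kernel kY"
    and rkhs: "is_rkhs_feature kA phiA" "is_rkhs_feature kW phiW" "is_rkhs_feature kY phiY"
    and tensors: "is_tensor_product tensAW" "is_tensor_product tensAY"
    and n_pos: "n > 0" and m_pos: "m > 0"
    and reg: "lam > 0" "\<eta> > 0"
  defines "phiAY \<equiv> (\<lambda>a' y'. tensAY (phiA a') (phiY y'))"
    and "Bm \<equiv> B_matrix kA kY n a y m ad yd lam"
    and "\<alpha> \<equiv> alpha_vec kA kW n w m ad yd \<eta> (B_matrix kA kY n a y m ad yd lam)"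
  shows "(\<exists>C. hilbert_schmidt C \<and>
            (\<forall>C'. hilbert_schmidt C' \<longrightarrow> stage1_obj phiW phiAY n w a y lam C \<le> stage1_obj phiW phiAY n w a y lam C'))
       \<and> (\<forall>C. hilbert_schmidt C \<and>
            (\<forall>C'. hilbert_schmidt C' \<longrightarrow> stage1_obj phiW phiAY n w a y lam C \<le> stage1_obj phiW phiAY n w a y lam C')
          \<longrightarrow> (\<exists>h. \<forall>h'. stage2_obj phiA phiAY tensAW C m ad yd \<eta> h \<le> stage2_obj phiA phiAY tensAW C m ad yd \<eta> h')
            \<and> (\<forall>h. (\<forall>h'. stage2_obj phiA phiAY tensAW C m ad yd \<eta> h \<le> stage2_obj phiA phiAY tensAW C m ad yd \<eta> h')
                 \<longrightarrow> (\<forall>a0 w0. inner h (tensAW (phiA a0) (phiW w0))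
                        = \<alpha> \<bullet> (kvec kA m ad a0 \<odot>\<^sub>v (transpose_mat Bm *\<^sub>v kvec kW n w w0)))))"
proof -
  have ipA: "\<And>x x'. inner (phiA x) (phiA x') = kA x x'"
    and ipW: "\<And>x x'. inner (phiW x) (phiW x') = kW x x'"
    and ipY: "\<And>x x'. inner (phiY x) (phiY x') = kY x x'"
    using rkhs unfolding is_rkhs_feature_def by blast+
  have tAW: "\<And>x y x' y'. inner (tensAW x y) (tensAW x' y') = inner x x' * inner y y'"
    and tAY: "\<And>x y x' y'. inner (tensAY x y) (tensAY x' y') = inner x x' * inner y y'"
    using tensors unfolding is_tensor_product_def by blast+
  define u where "u = (\<lambda>i. phiAY (a i) (y i))"
  define v where "v = (\<lambda>l. phiAY (ad l) (yd l))"
  define r where "r = (\<lambda>k. phiW (w k))"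
  define P where "P = mat_inv (gram_mat n u n u + (real n * lam) \<cdot>\<^sub>m 1\<^sub>m n)"
  define C0 where "C0 = (\<lambda>x. lincomb n (P *\<^sub>v vec n (\<lambda>j. inner (u j) x)) r)"
  have stage1: "hilbert_schmidt C \<and> (\<forall>C'. hilbert_schmidt C' \<longrightarrow>
      stage1_obj phiW phiAY n w a y lam C \<le> stage1_obj phiW phiAY n w a y lam C') \<longleftrightarrow> C = C0" for C
    using operator_ridge_closed_form[OF n_pos reg(1), of C u r]
    unfolding C0_def P_def by (simp add: stage1_obj_def operator_ridge_risk_def u_def r_def)
  have "real n * lam > 0" "real m * \<eta> > 0"
    using n_pos m_pos reg by simp_all
  note Gram_inverse =
    regularized_gram_mat_inverse(3)[OF this(1)] regularized_gram_mat_inverse(3)[OF this(2)]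
  have P: "P \<in> carrier_mat n n"
    unfolding P_def by (rule Gram_inverse(1))
  have Bm: "Bm = P * gram_mat n u m v"
    unfolding Bm_def P_def u_def v_def phiAY_def by (rule B_matrix_eq_gram_mat[OF ipA ipY tAY])
  then have B: "Bm \<in> carrier_mat n m"
    using P by simp
  define psi where "psi = (\<lambda>l. tensAW (phiA (ad l)) (lincomb n (col Bm l) r))"
  have "C0 (v l) = lincomb n (col Bm l) r" if "l < m" for l
    unfolding C0_def Bm using that by (simp add: col_mult2[OF P gram_mat_carrier])
  then have stage2: "stage2_obj phiA phiAY tensAW C0 m ad yd \<eta> = ridge_risk m psi yd \<eta>"
    unfolding stage2_obj_def ridge_risk_def fun_eq_iff
    by (auto intro!: sum.cong simp: psi_def v_def)
  have \<alpha>: "\<alpha> = mat_inv (gram_mat m psi m psi + (real m * \<eta>) \<cdot>\<^sub>m 1\<^sub>m m) *\<^sub>v vec m yd"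
    unfolding \<alpha>_def alpha_vec_def Bm_def[symmetric] psi_def r_def
    by (simp add: M_matrix_eq_gram_mat[OF ipA ipW tAW B])
  have "\<alpha> \<in> carrier_vec m"
    unfolding \<alpha> by (rule mult_mat_vec_carrier[OF Gram_inverse(2) vec_carrier])
  then have prediction: "inner (lincomb m \<alpha> psi) (tensAW (phiA a0) (phiW w0))
      = \<alpha> \<bullet> (kvec kA m ad a0 \<odot>\<^sub>v (transpose_mat Bm *\<^sub>v kvec kW n w w0))" for a0 w0
    unfolding psi_def r_def by (rule inner_lincomb_tensor_features[OF ipA ipW tAW B])
  show ?thesis
    using stage1 stage2 prediction ridge_closed_form[OF m_pos reg(2), of psi yd, folded \<alpha>] by metis
qed

end
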